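(* Let the problem data, partition, residuals, augmented Lagrangian and primal updates be as described in the context, and let $\{\mu^{c,k}_i\}_{k\ge 0}$, $c\in\mathcal{C}$, $i=1,\dots,N$, be arbitrary dual sequences with $\mu^{F,k}_i\ge 0$ componentwise for all $k$. Let the primal sequences $\{X^k_i, Z^k, Y^{c,k}_i\}$ be generated by the updates (U1)–(U3) from arbitrary initial values $X^0_i\in[-u,u]$, $Z^0\in[-u,u]$, $Y^{c,0}_i\in[0,u^c_{Y_i}]$. Then for every $k\ge 0$, $$ L^k\;\ge\; L^{k+1}+D^k+P^k+\sum_{i=1}^N\sum_{l=1}^M\Big({}^{1}\sigma^k_{i,l}\,\|X^k_{i,l}-X^{k+1}_{i,l}\|_1+U^k_{i,l}\Big), $$ where $$ L^k:=\sum_{i=1}^N L_i\big(X^k_i,Z^k,(Y^{c,k}_i)_c,(\mu^{c,k}_i)_c\big),\qquad D^k:=\sum_{i=1}^N\sum_{c\in\mathcal C}\big\langle \mu^{c,k}_i-\mu^{c,k+1}_i,\ r^{c,k+1}_i\big\rangle, $$ with $r^{c,k+1}_i:=r^c_i(X^{k+1}_i,Z^{k+1},Y^{c,k+1}_i)$; $$ P^k:=\sum_{i=1}^N\Big[\sum_{l}{}^{2}\sigma^k_{i,l}\|X^{k+1}_{i,l}-X^k_{i,l}\|^2+\rho_i\|X^{k+1}_i-X^k_i\|^2+(\tau^k+\rho_i)\|Z^{k+1}-Z^k\|^2+\sum_{c\in\mathcal C}\Big(\gamma^{c,k}_i+\tfrac{\rho_i}{2}\Big)\|Y^{c,k+1}_i-Y^{c,k}_i\|^2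 $$ $$ \qquad+\tfrac{\rho_i}{2}\sum_{l}\Big(\|F_i(X^{k+1,k+1}_{i,l})-F_i(X^{k+1,k}_{i,l})\|^2+\|G_{i,l}(X^{k+1}_{i,l}-X^k_{i,l})\|^2+2\|H_{i,l}(X^{k+1}_{i,l}-X^k_{i,l})\|^2\Big)\Big]; $$ and $$ U^k_{i,l}:=\Big\langle \mu^{F,k}_i+\rho_i\big(F_i(X^{k+1,k+1}_{i,l})+Y^{F,k}_i\big),\ F_i(X^{k+1,k}_{i,l})-F_i(X^{k+1,k+1}_{i,l})-\big(\nabla_{X_{i,l}}F_i(X^{k+1,k+1}_{i,l})\big)^{\!T}\!\!\cdot(X^k_{i,l}-X^{k+1}_{i,l})\Big\rangle, $$ where the last product denotes the vector whose $j$-th entry is $(X^k_{i,l}-X^{k+1}_{i,l})^T\nabla_{X_{i,l}}(F_i)_j(X^{k+1,k+1}_{i,l})$.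
   Context: Problem data. $n,N,M\in\mathbb N$. $u\in\mathbb R^n$ with $u>0$. $f(Z)=\langle f_0,Z\rangle$ is linear on $\mathbb R^n$. For each $i=1,\dots,N$: $F_i:\mathbb R^n\to\mathbb R^{p_i}$ has convex quadratic components (each component of the form $a(Z)+c(Z)^2$ or $c(Z)^2-a(Z)b(Z)$ with $a,b,c$ affine, convex on $[-u,u]$); $G_i:\mathbb R^n\to\mathbb R^{q_i}$ and $H_i:\mathbb R^n\to\mathbb R^{s_i}$ are affine. Vectors in $\mathbb R^n$ are partitioned into $M$ disjoint subvectors $Z=(Z_1,\dots,Z_M)$, $Z_l\in\mathbb R^{m_l}$, $\sum_l m_l=n$, the same partition for every $X_i\in\mathbb R^n$; correspondingly $u=(u_1,\dots,u_M)$, $f(Z)=\sum_l\langle f_l,Z_l\rangle$, $G_i(Z)=\sum_l G_{i,l}Z_l+G_{i,0}$, $H_i(Z)=\sum_l H_{i,l}Z_l+H_{i,0}$ with matrices $G_{i,l},H_{i,l}$. Slack variables and residuals. Let $\mathcal C=\{pX,nX,F,G,pH,nH\}$. For each $i$ there are slack vectors $Y^{pX}_i,Y^{nX}_i\in\mathbb R^n$, $Y^F_i\in\mathbb R^{p_i}$, $Y^G_i\in\mathbb R^{q_i}$, $Y^{pH}_i,Y^{nH}_i\in\mathbb R^{s_i}$, with given positive upper bound vectors $u^c_{Y_i}$ (slack boxes $[0,u^c_{Y_i}]$), and dual vectors $\mu^c_i$ of the same sizes. Residuals: $r^{pX}_i=X_i-Z+Y^{pX}_i$, $r^{nX}_i=Z-X_i+Y^{nX}_i$,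 $r^F_i=F_i(X_i)+Y^F_i$, $r^G_i=G_i(X_i)+Y^G_i$, $r^{pH}_i=H_i(X_i)+Y^{pH}_i$, $r^{nH}_i=-H_i(X_i)+Y^{nH}_i$. With $\rho_i>0$, the augmented Lagrangian of block $i$ is $$L_i=f(X_i)+\sum_{c\in\mathcal C}\langle\mu^c_i,r^c_i\rangle+\frac{\rho_i}{2}\sum_{c\in\mathcal C}\|r^c_i\|^2.$$ Gauss–Seidel notation: $X^{k+1,k}_{i,l}:=(X^{k+1}_{i,1},\dots,X^{k+1}_{i,l-1},X^k_{i,l},X^k_{i,l+1},\dots,X^k_{i,M})$ and $X^{k+1,k+1}_{i,l}:=(X^{k+1}_{i,1},\dots,X^{k+1}_{i,l},X^k_{i,l+1},\dots,X^k_{i,M})$. Parameters: ${}^{1}\sigma^k_{i,l}\ge0$, ${}^{2}\sigma^k_{i,l}>0$, $\tau^k>0$, $\gamma^{c,k}_i>0$. Updates at iteration $k$ (for each $i$): (U1) For $l=1,\dots,M$ in order, $X^{k+1}_{i,l}$ is the minimizer over $X_{i,l}\in[-u_l,u_l]$ of $L_i\big((X^{k+1}_{i,1},\dots,X^{k+1}_{i,l-1},X_{i,l},X^k_{i,l+1},\dots,X^k_{i,M}),Z^k,(Y^{c,k}_i)_c,(\mu^{c,k}_i)_c\big)+{}^{1}\sigma^k_{i,l}\|X_{i,l}-X^k_{i,l}\|_1+\tfrac{{}^{2}\sigma^k_{i,l}}{2}\|X_{i,l}-X^k_{i,l}\|^2$. (U2) $Z^{k+1}$ is the minimizer over $Z\in[-u,u]$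 of $\sum_{i=1}^N\Big(\langle\mu^{pX,k}_i,X^{k+1}_i-Z+Y^{pX,k}_i\rangle+\langle\mu^{nX,k}_i,Z-X^{k+1}_i+Y^{nX,k}_i\rangle+\tfrac{\rho_i}{2}\big(\|X^{k+1}_i-Z+Y^{pX,k}_i\|^2+\|Z-X^{k+1}_i+Y^{nX,k}_i\|^2\big)+\tfrac{\tau^k}{2}\|Z-Z^k\|^2\Big)$. (U3) For each $c\in\mathcal C$, $Y^{c,k+1}_i$ is the minimizer over $Y\in[0,u^c_{Y_i}]$ of $\langle\mu^{c,k}_i,r^c_i(X^{k+1}_i,Z^{k+1},Y)\rangle+\tfrac{\rho_i}{2}\|r^c_i(X^{k+1}_i,Z^{k+1},Y)\|^2+\tfrac{\gamma^{c,k}_i}{2}\|Y-Y^{c,k}_i\|^2$, where $r^c_i(X_i,Z,Y)$ denotes the residual $r^c_i$ with $Y^c_i=Y$. *)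

theory Defs
  imports "HOL-Analysis.Analysis"
begin

text \<open>Vectors of R^d are represented as functions nat => real; only the
components 0..d-1 are meaningful.\<close>

definition ip :: "nat \<Rightarrow> (nat \<Rightarrow> real) \<Rightarrow> (nat \<Rightarrow> real) \<Rightarrow> real" where
  "ip d a b = (\<Sum>j<d. a j * b j)"

definition sqn :: "nat \<Rightarrow> (nat \<Rightarrow> real) \<Rightarrow> real" where
  "sqn d a = ip d a a"

definition sqn_on :: "nat set \<Rightarrow> (nat \<Rightarrow> real) \<Rightarrow> real" where
  "sqn_on S a = (\<Sum>j\<in>S. (a j)^2)"

definition norm1_on :: "nat set \<Rightarrow> (nat \<Rightarrow> real) \<Rightarrow> real" where
  "norm1_on S a = (\<Sum>j\<in>S. \<bar>a j\<bar>)"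

definition vdiff :: "(nat \<Rightarrow> real) \<Rightarrow> (nat \<Rightarrow> real) \<Rightarrow> (nat \<Rightarrow> real)" where
  "vdiff a b = (\<lambda>j. a j - b j)"

definition inbox :: "nat \<Rightarrow> (nat \<Rightarrow> real) \<Rightarrow> (nat \<Rightarrow> real) \<Rightarrow> (nat \<Rightarrow> real) \<Rightarrow> bool" where
  "inbox d lo hi x \<longleftrightarrow> (\<forall>j<d. lo j \<le> x j \<and> x j \<le> hi j)"

definition affine_fn :: "nat \<Rightarrow> ((nat \<Rightarrow> real) \<Rightarrow> real) \<Rightarrow> bool" where
  "affine_fn n a \<longleftrightarrow> (\<exists>w b. \<forall>x. a x = (\<Sum>j<n. w j * x j) + b)"

definition quad_form :: "nat \<Rightarrow> ((nat \<Rightarrow> real) \<Rightarrow> real) \<Rightarrow> bool" where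
  "quad_form n g \<longleftrightarrow> (\<exists>a b c. affine_fn n a \<and> affine_fn n b \<and> affine_fn n c \<and>
      ((\<forall>x. g x = a x + (c x)^2) \<or> (\<forall>x. g x = (c x)^2 - a x * b x)))"

definition convex_on_box :: "nat \<Rightarrow> (nat \<Rightarrow> real) \<Rightarrow> ((nat \<Rightarrow> real) \<Rightarrow> real) \<Rightarrow> bool" where
  "convex_on_box n u g \<longleftrightarrow> (\<forall>x y t. inbox n (\<lambda>j. - u j) u x \<longrightarrow> inbox n (\<lambda>j. - u j) u y
      \<longrightarrow> 0 \<le> t \<longrightarrow> t \<le> 1 \<longrightarrow>
      g (\<lambda>j. t * x j + (1 - t) * y j) \<le> t * g x + (1 - t) * g y)"

definition affmap :: "nat \<Rightarrow> (nat \<Rightarrow> nat \<Rightarrow> real) \<Rightarrow> (nat \<Rightarrow> real) \<Rightarrow> (nat \<Rightarrow> real) \<Rightarrow> (nat \<Rightarrow> real)" where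
  "affmap n A b X = (\<lambda>j. (\<Sum>t<n. A j t * X t) + b j)"

definition blockmap :: "(nat \<Rightarrow> nat \<Rightarrow> real) \<Rightarrow> nat set \<Rightarrow> (nat \<Rightarrow> real) \<Rightarrow> (nat \<Rightarrow> real)" where
  "blockmap A S d = (\<lambda>j. (\<Sum>t\<in>S. A j t * d t))"

text \<open>Directional derivative: for differentiable g, dirderiv g x d = d^T grad g(x).
  With d supported on block l this is d_l^T grad_{X_l} g(x).\<close>
definition dirderiv :: "((nat \<Rightarrow> real) \<Rightarrow> real) \<Rightarrow> (nat \<Rightarrow> real) \<Rightarrow> (nat \<Rightarrow> real) \<Rightarrow> real" where
  "dirderiv g x d = deriv (\<lambda>t. g (\<lambda>j. x j + t * d j)) 0"

datatype cls = PX | NX | CF | CG | PH | NH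

definition allC :: "cls set" where
  "allC = {PX, NX, CF, CG, PH, NH}"

fun cdim :: "nat \<Rightarrow> nat \<Rightarrow> nat \<Rightarrow> nat \<Rightarrow> cls \<Rightarrow> nat" where
  "cdim n p q s PX = n"
| "cdim n p q s NX = n"
| "cdim n p q s CF = p"
| "cdim n p q s CG = q"
| "cdim n p q s PH = s"
| "cdim n p q s NH = s"

fun resid :: "((nat \<Rightarrow> real) \<Rightarrow> (nat \<Rightarrow> real)) \<Rightarrow> ((nat \<Rightarrow> real) \<Rightarrow> (nat \<Rightarrow> real)) \<Rightarrow>
    ((nat \<Rightarrow> real) \<Rightarrow> (nat \<Rightarrow> real)) \<Rightarrow> cls \<Rightarrow>
    (nat \<Rightarrow> real) \<Rightarrow> (nat \<Rightarrow> real) \<Rightarrow> (nat \<Rightarrow> real) \<Rightarrow> (nat \<Rightarrow> real)" where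
  "resid Fi Gi Hi PX X Z Y = (\<lambda>j. X j - Z j + Y j)"
| "resid Fi Gi Hi NX X Z Y = (\<lambda>j. Z j - X j + Y j)"
| "resid Fi Gi Hi CF X Z Y = (\<lambda>j. Fi X j + Y j)"
| "resid Fi Gi Hi CG X Z Y = (\<lambda>j. Gi X j + Y j)"
| "resid Fi Gi Hi PH X Z Y = (\<lambda>j. Hi X j + Y j)"
| "resid Fi Gi Hi NH X Z Y = (\<lambda>j. - Hi X j + Y j)"

definition augL :: "nat \<Rightarrow> (nat \<Rightarrow> real) \<Rightarrow> (cls \<Rightarrow> nat) \<Rightarrow>
    ((nat \<Rightarrow> real) \<Rightarrow> (nat \<Rightarrow> real)) \<Rightarrow> ((nat \<Rightarrow> real) \<Rightarrow> (nat \<Rightarrow> real)) \<Rightarrow>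
    ((nat \<Rightarrow> real) \<Rightarrow> (nat \<Rightarrow> real)) \<Rightarrow> real \<Rightarrow>
    (nat \<Rightarrow> real) \<Rightarrow> (nat \<Rightarrow> real) \<Rightarrow> (cls \<Rightarrow> nat \<Rightarrow> real) \<Rightarrow> (cls \<Rightarrow> nat \<Rightarrow> real) \<Rightarrow> real" where
  "augL n f0 dims Fi Gi Hi rho X Z Y mu =
     ip n f0 X + (\<Sum>c\<in>allC. ip (dims c) (mu c) (resid Fi Gi Hi c X Z (Y c)))
     + rho / 2 * (\<Sum>c\<in>allC. sqn (dims c) (resid Fi Gi Hi c X Z (Y c)))"

definition gs_prev :: "(nat \<Rightarrow> nat set) \<Rightarrow> nat \<Rightarrow> (nat \<Rightarrow> real) \<Rightarrow> (nat \<Rightarrow> real) \<Rightarrow> (nat \<Rightarrow> real)" where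
  "gs_prev B l Xnew Xold = (\<lambda>j. if j \<in> (\<Union>l'\<in>{1..<l}. B l') then Xnew j else Xold j)"

definition gs_cur :: "(nat \<Rightarrow> nat set) \<Rightarrow> nat \<Rightarrow> (nat \<Rightarrow> real) \<Rightarrow> (nat \<Rightarrow> real) \<Rightarrow> (nat \<Rightarrow> real)" where
  "gs_cur B l Xnew Xold = (\<lambda>j. if j \<in> (\<Union>l'\<in>{1..l}. B l') then Xnew j else Xold j)"

definition blk_upd :: "(nat \<Rightarrow> nat set) \<Rightarrow> nat \<Rightarrow> (nat \<Rightarrow> real) \<Rightarrow> (nat \<Rightarrow> real) \<Rightarrow> (nat \<Rightarrow> real)" where
  "blk_upd B l base V = (\<lambda>j. if j \<in> B l then V j else base j)"

definition restr :: "nat set \<Rightarrow> (nat \<Rightarrow> real) \<Rightarrow> (nat \<Rightarrow> real)" where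
  "restr S d = (\<lambda>j. if j \<in> S then d j else 0)"

end

theory Submission
  imports Defs
begin

text \<open>
  Every primal update minimizes its objective over a box, so moving from the new iterate a
  fraction \<open>t\<close> of the way back to the old one cannot decrease that objective. Along such a
  segment each augmented Lagrangian is a polynomial \<open>f t = f 0 + t A + t\<^sup>2 C t\<close>: exactly
  quadratic in \<open>Z\<close> and in the slacks, and of degree four in \<open>X\<close> because the components of
  \<open>F\<close> are quadratic. Letting \<open>t \<rightarrow> 0\<close> shows that \<open>A\<close> dominates the first-order part of the
  proximal terms, and evaluating at \<open>t = 1\<close> bounds the decrease \<open>f 1 - f 0\<close> from below by the
  proximal terms plus \<open>C 1\<close>; in the \<open>X\<close>-blocks \<open>C 1\<close> consists of the squared changes of the
  residuals and the linearization gap \<open>U\<close> of \<open>F\<close>. The \<open>X\<close>-blocks telescope along the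
  Gauss--Seidel sweep, the \<open>Z\<close>- and slack steps are added, and the change of multipliers is
  accounted for by \<open>D\<close>.
\<close>

section \<open>Minimality along a segment\<close>

lemma nonneg_of_nonneg_perturbation:
  fixes K C :: real
  assumes "\<And>t. 0 < t \<Longrightarrow> t \<le> 1 \<Longrightarrow> 0 \<le> K + t * C"
  shows "0 \<le> K"
proof (rule tendsto_lowerbound)
  show "((\<lambda>t. K + t * C) \<longlongrightarrow> K) (at_right 0)"
    by (auto intro!: tendsto_eq_intros)
  show "\<forall>\<^sub>F t in at_right 0. 0 \<le> K + t * C"
    unfolding eventually_at_right_field using assms by (intro exI[of _ 1]) auto
qed simp

lemma descent_of_segment_minimality:
  fixes f C :: "real \<Rightarrow> real" and A a b :: real
  assumes expand: "\<And>t. f t = f 0 + t * A + t\<^sup>2 * C t"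
    and cont: "continuous_on {0..1} C"
    and min: "\<And>t. 0 < t \<Longrightarrow> t \<le> 1 \<Longrightarrow> f 0 + a + b / 2 \<le> f t + (1 - t) * a + (1 - t)\<^sup>2 * b / 2"
  shows "f 0 + a + b + C 1 \<le> f 1"
proof -
  obtain Cmax where Cmax: "\<And>t. t \<in> {0..1} \<Longrightarrow> C t \<le> Cmax"
    using continuous_attains_sup[OF compact_Icc _ cont] by fastforce
  have "0 \<le> A - a - b"
  proof (rule nonneg_of_nonneg_perturbation)
    fix t :: real assume t: "0 < t" "t \<le> 1"
    have "0 \<le> t * (A - a - b) + t\<^sup>2 * (C t + b / 2)"
      using min[OF t] expand[of t]
      by (simp add: power2_eq_square algebra_simps add_divide_distrib diff_divide_distrib)
    also have "\<dots> \<le> t * (A - a - b) + t\<^sup>2 * (Cmax + b / 2)"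
      using Cmax[of t] t by (intro add_left_mono mult_left_mono) auto
    also have "\<dots> = t * ((A - a - b) + t * (Cmax + b / 2))"
      by (simp add: power2_eq_square algebra_simps)
    finally show "0 \<le> (A - a - b) + t * (Cmax + b / 2)"
      using t by (simp add: zero_le_mult_iff)
  qed
  then show ?thesis using expand[of 1] by simp
qed

lemma segment_in_interval:
  fixes lo hi x y t :: real
  assumes "lo \<le> x" "x \<le> hi" "lo \<le> y" "y \<le> hi" "0 \<le> t" "t \<le> 1"
  shows "lo \<le> y + t * (x - y) \<and> y + t * (x - y) \<le> hi"
proof -
  have eq: "y + t * (x - y) = (1 - t) * y + t * x"
    by (simp add: algebra_simps)
  have "(1 - t) * lo + t * lo \<le> (1 - t) * y + t * x"
    using assms by (intro add_mono mult_left_mono) auto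
  moreover have "(1 - t) * y + t * x \<le> (1 - t) * hi + t * hi"
    using assms by (intro add_mono mult_left_mono) auto
  ultimately show ?thesis
    unfolding eq by (simp add: algebra_simps)
qed

lemma ip_cong:
  "(\<And>j. j < d \<Longrightarrow> a j = a' j) \<Longrightarrow> (\<And>j. j < d \<Longrightarrow> b j = b' j) \<Longrightarrow> ip d a b = ip d a' b'"
  unfolding ip_def by (intro sum.cong) auto

lemma sqn_cong: "(\<And>j. j < d \<Longrightarrow> a j = a' j) \<Longrightarrow> sqn d a = sqn d a'"
  unfolding sqn_def by (rule ip_cong)

lemma sqn_eq_sqn_on: "sqn d v = sqn_on {..<d} v"
  unfolding sqn_def ip_def sqn_on_def by (simp add: power2_eq_square)

lemma sqn_uminus: "sqn d (\<lambda>j. - v j) = sqn d v"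
  unfolding sqn_def ip_def by simp

lemma sqn_on_vdiff_commute: "sqn_on S (vdiff a b) = sqn_on S (vdiff b a)"
  unfolding sqn_on_def vdiff_def by (simp add: power2_commute)

lemma ip_add_scaled: "ip d m (\<lambda>j. a j + t * b j) = ip d m a + t * ip d m b"
  unfolding ip_def by (simp add: algebra_simps sum.distrib sum_distrib_left)

lemma ip_vdiff: "ip d (vdiff a b) v = ip d a v - ip d b v"
  unfolding ip_def vdiff_def by (simp add: algebra_simps sum_subtractf)

lemma sqn_on_segment:
  "sqn_on S (vdiff (\<lambda>j. y j + t * (x j - y j)) x) = (1 - t)\<^sup>2 * sqn_on S (vdiff y x)"
  unfolding sqn_on_def vdiff_def sum_distrib_left
  by (intro sum.cong) (auto simp: power2_eq_square algebra_simps)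

lemma sqn_segment:
  "sqn d (vdiff (\<lambda>j. y j + t * (x j - y j)) x) = (1 - t)\<^sup>2 * sqn d (vdiff y x)"
  unfolding sqn_eq_sqn_on by (rule sqn_on_segment)

lemma sqn_vdiff_commute: "sqn d (vdiff a b) = sqn d (vdiff b a)"
  unfolding sqn_eq_sqn_on by (rule sqn_on_vdiff_commute)

lemma norm1_on_segment:
  assumes "t \<le> 1"
  shows "norm1_on S (vdiff (\<lambda>j. y j + t * (x j - y j)) x) = (1 - t) * norm1_on S (vdiff x y)"
proof -
  have "\<bar>y j + t * (x j - y j) - x j\<bar> = (1 - t) * \<bar>x j - y j\<bar>" for j
  proof -
    have "y j + t * (x j - y j) - x j = (1 - t) * (y j - x j)"
      by (simp add: algebra_simps)
    then show ?thesis
      using assms by (simp add: abs_mult abs_minus_commute)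
  qed
  then show ?thesis
    unfolding norm1_on_def vdiff_def sum_distrib_left by simp
qed

lemma inbox_segment:
  assumes "inbox d lo hi x" "inbox d lo hi y" "0 \<le> t" "t \<le> 1"
  shows "inbox d lo hi (\<lambda>j. y j + t * (x j - y j))"
  using assms segment_in_interval unfolding inbox_def by blast

lemma descent_of_prox_step:
  fixes \<phi> :: "(nat \<Rightarrow> real) \<Rightarrow> real" and yn yo :: "nat \<Rightarrow> real"
  defines "seg \<equiv> \<lambda>t j. yn j + t * (yo j - yn j)"
  assumes expand: "\<And>t. \<phi> (seg t) = \<phi> yn + t * A + t\<^sup>2 * C"
    and min: "\<And>t. 0 < t \<Longrightarrow> t \<le> 1 \<Longrightarrow>
      \<phi> yn + g / 2 * sqn d (vdiff yn yo) \<le> \<phi> (seg t) + g / 2 * sqn d (vdiff (seg t) yo)"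
  shows "\<phi> yn + g * sqn d (vdiff yn yo) + C \<le> \<phi> yo"
proof -
  define f where "f t = \<phi> (seg t)" for t
  have seg0: "seg 0 = yn" and seg1: "seg 1 = yo"
    unfolding seg_def by simp_all
  have "f 0 + 0 + g * sqn d (vdiff yn yo) + C \<le> f 1"
  proof (rule descent_of_segment_minimality[where C = "\<lambda>_. C"])
    show "f t = f 0 + t * A + t\<^sup>2 * C" for t
      unfolding f_def seg0 by (rule expand)
    fix t :: real assume "0 < t" "t \<le> 1"
    from min[OF this] show "f 0 + 0 + g * sqn d (vdiff yn yo) / 2
        \<le> f t + (1 - t) * 0 + (1 - t)\<^sup>2 * (g * sqn d (vdiff yn yo)) / 2"
      unfolding f_def seg0 seg_def sqn_segment by (simp add: algebra_simps)
  qed simp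
  then show ?thesis
    unfolding f_def seg0 seg1 by simp
qed

definition penalty :: "nat \<Rightarrow> (nat \<Rightarrow> real) \<Rightarrow> real \<Rightarrow> (nat \<Rightarrow> real) \<Rightarrow> real" where
  "penalty d m r v = ip d m v + r / 2 * sqn d v"

lemma penalty_along_curve:
  assumes "\<And>j. j < d \<Longrightarrow> v j = v0 j + t * v1 j + t\<^sup>2 * v2 j"
  shows "penalty d m r v = penalty d m r v0 + t * ip d (\<lambda>j. m j + r * v0 j) v1
     + t\<^sup>2 * (ip d (\<lambda>j. m j + r * v0 j) v2 + r / 2 * sqn d (\<lambda>j. v1 j + t * v2 j))"
proof -
  have "penalty d m r v = (\<Sum>j<d. m j * v j + r / 2 * (v j * v j))"
    unfolding penalty_def ip_def sqn_def by (simp add: sum.distrib sum_distrib_left)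
  also have "\<dots> = (\<Sum>j<d. (m j * v0 j + r / 2 * (v0 j * v0 j)) + t * ((m j + r * v0 j) * v1 j)
      + t\<^sup>2 * ((m j + r * v0 j) * v2 j + r / 2 * ((v1 j + t * v2 j) * (v1 j + t * v2 j))))"
    by (intro sum.cong) (simp_all add: assms power2_eq_square algebra_simps)
  also have "\<dots> = penalty d m r v0 + t * ip d (\<lambda>j. m j + r * v0 j) v1
     + t\<^sup>2 * (ip d (\<lambda>j. m j + r * v0 j) v2 + r / 2 * sqn d (\<lambda>j. v1 j + t * v2 j))"
    unfolding penalty_def ip_def sqn_def by (simp add: sum.distrib sum_distrib_left distrib_left)
  finally show ?thesis .
qed

lemma penalty_along_line:
  assumes "\<And>j. j < d \<Longrightarrow> v j = v0 j + t * v1 j"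
  shows "penalty d m r v = penalty d m r v0 + t * ip d (\<lambda>j. m j + r * v0 j) v1 + t\<^sup>2 * (r / 2 * sqn d v1)"
  using penalty_along_curve[of d v v0 t v1 "\<lambda>_. 0"] assms by (simp add: ip_def)

lemma penalty_cong: "(\<And>j. j < d \<Longrightarrow> v j = v' j) \<Longrightarrow> penalty d m r v = penalty d m r v'"
  unfolding penalty_def by (metis ip_cong sqn_cong)

section \<open>Quadratic constraint functions\<close>

lemma affine_fn_cong:
  assumes "affine_fn n a" "\<And>j. j < n \<Longrightarrow> x j = y j"
  shows "a x = a y"
  using assms unfolding affine_fn_def by auto

lemma quad_form_cong:
  assumes "quad_form n g" "\<And>j. j < n \<Longrightarrow> x j = y j"
  shows "g x = g y"
  using assms affine_fn_cong[of n _ x y] unfolding quad_form_def by metis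

lemma affine_fn_along_line:
  assumes "affine_fn n a"
  shows "a (\<lambda>j. x j + t * d j) = a x + t * (a (\<lambda>j. x j + d j) - a x)"
proof -
  obtain w b where "\<And>x. a x = (\<Sum>j<n. w j * x j) + b"
    using assms unfolding affine_fn_def by blast
  then show ?thesis by (simp add: algebra_simps sum.distrib sum_distrib_left)
qed

lemma quad_form_along_line_polynomial:
  assumes "quad_form n g"
  obtains p1 p2 where "\<And>t. g (\<lambda>j. x j + t * d j) = g x + p1 * t + p2 * t\<^sup>2"
proof -
  obtain a b c where abc: "affine_fn n a" "affine_fn n b" "affine_fn n c"
    "(\<forall>x. g x = a x + (c x)\<^sup>2) \<or> (\<forall>x. g x = (c x)\<^sup>2 - a x * b x)"
    using assms unfolding quad_form_def by blast
  define \<alpha> where "\<alpha> = a (\<lambda>j. x j + d j) - a x"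
  define \<beta> where "\<beta> = b (\<lambda>j. x j + d j) - b x"
  define \<gamma> where "\<gamma> = c (\<lambda>j. x j + d j) - c x"
  have a: "a (\<lambda>j. x j + t * d j) = a x + t * \<alpha>"
    and b: "b (\<lambda>j. x j + t * d j) = b x + t * \<beta>"
    and c: "c (\<lambda>j. x j + t * d j) = c x + t * \<gamma>" for t
    unfolding \<alpha>_def \<beta>_def \<gamma>_def using abc(1-3) by (auto intro: affine_fn_along_line)
  from abc(4) show ?thesis
  proof
    assume g: "\<forall>x. g x = a x + (c x)\<^sup>2"
    show ?thesis
      by (intro that[of "\<alpha> + 2 * c x * \<gamma>" "\<gamma>\<^sup>2"]) (simp add: g a c power2_eq_square algebra_simps)
  next
    assume g: "\<forall>x. g x = (c x)\<^sup>2 - a x * b x"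
    show ?thesis
      by (intro that[of "2 * c x * \<gamma> - \<alpha> * b x - a x * \<beta>" "\<gamma>\<^sup>2 - \<alpha> * \<beta>"])
         (simp add: g a b c power2_eq_square algebra_simps)
  qed
qed

lemma quad_form_along_line:
  assumes "quad_form n g"
  shows "g (\<lambda>j. x j + t * d j) = g x + t * dirderiv g x d
           + t\<^sup>2 * (g (\<lambda>j. x j + d j) - g x - dirderiv g x d)"
proof -
  obtain p1 p2 where p: "\<And>t. g (\<lambda>j. x j + t * d j) = g x + p1 * t + p2 * t\<^sup>2"
    using quad_form_along_line_polynomial[OF assms] by blast
  have "((\<lambda>t. g x + p1 * t + p2 * t\<^sup>2) has_real_derivative p1) (at 0)"
    by (auto intro!: derivative_eq_intros)
  then have "dirderiv g x d = p1"
    unfolding dirderiv_def p by (rule DERIV_imp_deriv)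
  moreover have "g (\<lambda>j. x j + d j) = g x + p1 + p2"
    using p[of 1] by simp
  ultimately show ?thesis
    using p[of t] by (simp add: algebra_simps)
qed

section \<open>The augmented Lagrangian along a line\<close>

lemma mem_allC [simp]: "c \<in> allC"
  by (cases c) (simp_all add: allC_def)

lemma sum_allC: "(\<Sum>c\<in>allC. f c) = f PX + f NX + f CF + f CG + f PH + f NH"
  by (simp add: allC_def add.assoc)

lemma augL_eq_penalty:
  "augL n f0 dims Fi Gi Hi r x z y mu
     = ip n f0 x + (\<Sum>c\<in>allC. penalty (dims c) (mu c) r (resid Fi Gi Hi c x z (y c)))"
  unfolding augL_def penalty_def by (simp add: sum.distrib sum_distrib_left)

lemma augL_dual_update:
  "augL n f0 dims Fi Gi Hi r x z y mu'
     + (\<Sum>c\<in>allC. ip (dims c) (vdiff (mu c) (mu' c)) (resid Fi Gi Hi c x z (y c)))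
   = augL n f0 dims Fi Gi Hi r x z y mu"
  unfolding augL_def ip_vdiff by (simp add: sum_subtractf)

lemma augL_diff_z:
  "augL n f0 dims Fi Gi Hi r x z y mu - augL n f0 dims Fi Gi Hi r x z' y mu
   = (penalty (dims PX) (mu PX) r (\<lambda>j. x j - z j + y PX j)
        + penalty (dims NX) (mu NX) r (\<lambda>j. z j - x j + y NX j))
     - (penalty (dims PX) (mu PX) r (\<lambda>j. x j - z' j + y PX j)
        + penalty (dims NX) (mu NX) r (\<lambda>j. z' j - x j + y NX j))"
  unfolding augL_eq_penalty sum_allC by simp

lemma augL_diff_y:
  "augL n f0 dims Fi Gi Hi r x z y mu - augL n f0 dims Fi Gi Hi r x z y' mu
   = (\<Sum>c\<in>allC. penalty (dims c) (mu c) r (resid Fi Gi Hi c x z (y c))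
                 - penalty (dims c) (mu c) r (resid Fi Gi Hi c x z (y' c)))"
  unfolding augL_eq_penalty by (simp add: sum_subtractf)


lemma augL_cong:
  assumes quad: "\<And>j. j < p \<Longrightarrow> quad_form n (Fi j)"
    and eq: "\<And>j. j < n \<Longrightarrow> x j = x' j"
  shows "augL n f0 (cdim n p q s) (\<lambda>x j. Fi j x) (affmap n Gm G0) (affmap n Hm H0) r x z y mu
       = augL n f0 (cdim n p q s) (\<lambda>x j. Fi j x) (affmap n Gm G0) (affmap n Hm H0) r x' z y mu"
proof -
  have "penalty (cdim n p q s c) (mu c) r (resid (\<lambda>x j. Fi j x) (affmap n Gm G0) (affmap n Hm H0) c x z (y c))
      = penalty (cdim n p q s c) (mu c) r (resid (\<lambda>x j. Fi j x) (affmap n Gm G0) (affmap n Hm H0) c x' z (y c))"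
    for c
  proof (rule penalty_cong)
    fix j assume "j < cdim n p q s c"
    moreover have "\<And>j. j < p \<Longrightarrow> Fi j x = Fi j x'"
      using quad_form_cong[OF quad eq] .
    ultimately show "resid (\<lambda>x j. Fi j x) (affmap n Gm G0) (affmap n Hm H0) c x z (y c) j
      = resid (\<lambda>x j. Fi j x) (affmap n Gm G0) (affmap n Hm H0) c x' z (y c) j"
      by (cases c) (simp_all add: eq affmap_def)
  qed
  moreover have "ip n f0 x = ip n f0 x'"
    using eq by (intro ip_cong) simp_all
  ultimately show ?thesis
    unfolding augL_eq_penalty by simp
qed

lemma augL_along_line:
  fixes n p q s :: nat and r :: real and cost z :: "nat \<Rightarrow> real" and y mu :: "cls \<Rightarrow> nat \<Rightarrow> real"
    and Fi :: "nat \<Rightarrow> (nat \<Rightarrow> real) \<Rightarrow> real"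
    and Gm Hm :: "nat \<Rightarrow> nat \<Rightarrow> real" and Gb Hb :: "nat \<Rightarrow> real"
  assumes quad: "\<And>j. j < p \<Longrightarrow> quad_form n (Fi j)"
  defines "L \<equiv> \<lambda>x. augL n cost (cdim n p q s) (\<lambda>x j. Fi j x) (affmap n Gm Gb) (affmap n Hm Hb) r x z y mu"
  obtains A C where "\<And>t. L (\<lambda>j. x j + t * d j) = L x + t * A + t\<^sup>2 * C t"
    and "continuous_on {0..1} C"
    and "C 1 = ip p (\<lambda>j. mu CF j + r * (Fi j x + y CF j))
                   (\<lambda>j. Fi j (\<lambda>j. x j + d j) - Fi j x - dirderiv (Fi j) x d)
             + r / 2 * (2 * sqn n d + sqn p (\<lambda>j. Fi j x - Fi j (\<lambda>j. x j + d j))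
                        + sqn q (\<lambda>j. \<Sum>t<n. Gm j t * d t) + 2 * sqn s (\<lambda>j. \<Sum>t<n. Hm j t * d t))"
proof -
  define dims where "dims = cdim n p q s"
  define res where "res = (\<lambda>c x. resid (\<lambda>x j. Fi j x) (affmap n Gm Gb) (affmap n Hm Hb) c x z (y c))"
  define Fd where "Fd = (\<lambda>j. dirderiv (Fi j) x d)"
  define Fq where "Fq = (\<lambda>j. Fi j (\<lambda>j. x j + d j) - Fi j x - Fd j)"
  define Gd where "Gd = (\<lambda>j. \<Sum>t<n. Gm j t * d t)"
  define Hd where "Hd = (\<lambda>j. \<Sum>t<n. Hm j t * d t)"
  define R1 where "R1 = (\<lambda>c. case c of PX \<Rightarrow> d | NX \<Rightarrow> (\<lambda>j. - d j) | CF \<Rightarrow> Fd | CG \<Rightarrow> Gd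
       | PH \<Rightarrow> Hd | NH \<Rightarrow> (\<lambda>j. - Hd j))"
  define R2 where "R2 = (\<lambda>c. if c = CF then Fq else (\<lambda>_. 0))"
  define w where "w = (\<lambda>c j. mu c j + r * res c x j)"
  define A where "A = ip n cost d + (\<Sum>c\<in>allC. ip (dims c) (w c) (R1 c))"
  define C where "C = (\<lambda>t. \<Sum>c\<in>allC. ip (dims c) (w c) (R2 c) + r / 2 * sqn (dims c) (\<lambda>j. R1 c j + t * R2 c j))"
  have res_line: "res c (\<lambda>j. x j + t * d j) j = res c x j + t * R1 c j + t\<^sup>2 * R2 c j"
    if "j < dims c" for c t j
  proof (cases c)
    case CF
    then show ?thesis
      using that quad_form_along_line[OF quad]
      by (simp add: res_def R1_def R2_def dims_def Fd_def Fq_def)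
  qed (simp_all add: res_def R1_def R2_def dims_def affmap_def Gd_def Hd_def algebra_simps
        sum.distrib sum_distrib_left)
  have pen: "penalty (dims c) (mu c) r (res c (\<lambda>j. x j + t * d j)) = penalty (dims c) (mu c) r (res c x)
      + t * ip (dims c) (w c) (R1 c)
      + t\<^sup>2 * (ip (dims c) (w c) (R2 c) + r / 2 * sqn (dims c) (\<lambda>j. R1 c j + t * R2 c j))" for c t
    unfolding w_def by (rule penalty_along_curve) (rule res_line)
  have L_pen: "L x' = ip n cost x' + (\<Sum>c\<in>allC. penalty (dims c) (mu c) r (res c x'))" for x'
    unfolding L_def augL_eq_penalty dims_def res_def ..
  have "L (\<lambda>j. x j + t * d j) = L x + t * A + t\<^sup>2 * C t" for t
    unfolding L_pen pen ip_add_scaled A_def C_def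
    by (simp add: sum.distrib sum_distrib_left algebra_simps)
  moreover have "continuous_on {0..1} C"
    unfolding C_def sqn_def ip_def by (intro continuous_intros)
  moreover have "C 1 = ip p (\<lambda>j. mu CF j + r * (Fi j x + y CF j)) Fq
      + r / 2 * (2 * sqn n d + sqn p (\<lambda>j. Fi j x - Fi j (\<lambda>j. x j + d j)) + sqn q Gd + 2 * sqn s Hd)"
  proof -
    have "sqn p (\<lambda>j. Fd j + Fq j) = sqn p (\<lambda>j. Fi j x - Fi j (\<lambda>j. x j + d j))"
      unfolding Fq_def sqn_def ip_def by (intro sum.cong) (auto simp: algebra_simps)
    then show ?thesis
      unfolding C_def sum_allC
      by (simp add: R1_def R2_def ip_def sqn_uminus dims_def w_def res_def algebra_simps)
  qed
  ultimately show ?thesis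
    using that unfolding Fq_def Fd_def Gd_def Hd_def by blast
qed

lemma resid_slack: "resid Fi Gi Hi c x z w j = resid Fi Gi Hi c x z (\<lambda>_. 0) j + w j"
  by (cases c) simp_all

section \<open>Gauss--Seidel sweeps\<close>

lemma gs_cur_eq_gs_prev_Suc: "gs_cur B l xn xo = gs_prev B (Suc l) xn xo"
  unfolding gs_cur_def gs_prev_def by (simp add: atLeastLessThanSuc_atLeastAtMost)

lemma gs_prev_first: "gs_prev B 1 xn xo = xo"
  unfolding gs_prev_def by simp

lemma gs_prev_last:
  assumes "(\<Union>l\<in>{1..M}. B l) = {..<n}" "j < n"
  shows "gs_prev B (Suc M) xn xo j = xn j"
  using assms unfolding gs_prev_def by (auto simp: atLeastLessThanSuc_atLeastAtMost)

lemma blk_upd_gs_prev_segment: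
  assumes "0 < l" "B l \<inter> (\<Union>l'\<in>{1..<l}. B l') = {}"
  shows "blk_upd B l (gs_prev B l xn xo) (\<lambda>j. xn j + t * (xo j - xn j))
       = (\<lambda>j. gs_cur B l xn xo j + t * restr (B l) (vdiff xo xn) j)"
proof -
  have "{1..l} = insert l {1..<l}"
    using assms(1) by auto
  then show ?thesis
    using assms(2) unfolding blk_upd_def gs_prev_def gs_cur_def restr_def vdiff_def
    by (auto simp: fun_eq_iff)
qed

lemma gs_cur_add_restr:
  assumes "0 < l" "B l \<inter> (\<Union>l'\<in>{1..<l}. B l') = {}"
  shows "(\<lambda>j. gs_cur B l xn xo j + restr (B l) (vdiff xo xn) j) = gs_prev B l xn xo"
proof -
  have "{1..l} = insert l {1..<l}"
    using assms(1) by auto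
  then show ?thesis
    using assms(2) unfolding gs_prev_def gs_cur_def restr_def vdiff_def
    by (auto simp: fun_eq_iff)
qed

lemma sqn_restr:
  assumes "S \<subseteq> {..<n}"
  shows "sqn n (restr S v) = sqn_on S v"
proof -
  have "sqn n (restr S v) = (\<Sum>j<n. if j \<in> S then (v j)\<^sup>2 else 0)"
    unfolding sqn_def ip_def restr_def by (intro sum.cong) (auto simp: power2_eq_square)
  also have "\<dots> = (\<Sum>j\<in>{..<n} \<inter> S. (v j)\<^sup>2)"
    by (simp add: sum.inter_restrict)
  also have "{..<n} \<inter> S = S"
    using assms by blast
  finally show ?thesis
    unfolding sqn_on_def .
qed

lemma sum_restr_eq_blockmap:
  assumes "S \<subseteq> {..<n}"
  shows "(\<lambda>j. \<Sum>t<n. A j t * restr S v t) = blockmap A S v"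
proof
  fix j
  have "(\<Sum>t<n. A j t * restr S v t) = (\<Sum>t<n. if t \<in> S then A j t * v t else 0)"
    unfolding restr_def by (intro sum.cong) auto
  also have "\<dots> = (\<Sum>t\<in>{..<n} \<inter> S. A j t * v t)"
    by (simp add: sum.inter_restrict)
  also have "{..<n} \<inter> S = S"
    using assms by blast
  finally show "(\<Sum>t<n. A j t * restr S v t) = blockmap A S v j"
    unfolding blockmap_def .
qed

lemma blockmap_vdiff_commute: "blockmap A S (vdiff a b) = (\<lambda>j. - blockmap A S (vdiff b a) j)"
  unfolding blockmap_def vdiff_def by (simp add: algebra_simps flip: sum_negf)

lemma sqn_on_blocks:
  fixes M :: nat
  assumes cover: "(\<Union>l\<in>{1..M}. B l) = {..<n}"
    and disj: "disjoint_family_on B {1..M}"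
  shows "(\<Sum>l\<in>{1..M}. sqn_on (B l) v) = sqn n v"
proof -
  have "finite (B l)" if "l \<in> {1..M}" for l
    using that cover finite_subset[of "B l" "{..<n}"] by blast
  then have "(\<Sum>l\<in>{1..M}. sqn_on (B l) v) = sqn_on (\<Union>l\<in>{1..M}. B l) v"
    unfolding sqn_on_def using disj by (intro sum.UNION_disjoint[symmetric]) (simp_all add: disjoint_family_on_def)
  then show ?thesis
    unfolding cover sqn_eq_sqn_on .
qed

section \<open>One iteration of the method\<close>

text \<open>
  The notions of the iteration are abbreviations rather than definitions, so that the statements
  below are literally the hypotheses and the conclusion of the theorem with its \<open>let\<close>s unfolded.
\<close>

locale admm_data =
  fixes n N M :: nat
    and u f0 :: "nat \<Rightarrow> real"
    and p q s :: "nat \<Rightarrow> nat"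
    and F :: "nat \<Rightarrow> nat \<Rightarrow> (nat \<Rightarrow> real) \<Rightarrow> real"
    and Gm Hm :: "nat \<Rightarrow> nat \<Rightarrow> nat \<Rightarrow> real"
    and G0 H0 :: "nat \<Rightarrow> nat \<Rightarrow> real"
    and B :: "nat \<Rightarrow> nat set"
    and uY :: "nat \<Rightarrow> cls \<Rightarrow> nat \<Rightarrow> real"
    and rho :: "nat \<Rightarrow> real"
    and sig1 sig2 :: "nat \<Rightarrow> nat \<Rightarrow> nat \<Rightarrow> real"
    and tau :: "nat \<Rightarrow> real"
    and gam :: "nat \<Rightarrow> nat \<Rightarrow> cls \<Rightarrow> real"
    and mu Y :: "nat \<Rightarrow> nat \<Rightarrow> cls \<Rightarrow> nat \<Rightarrow> real"
    and X :: "nat \<Rightarrow> nat \<Rightarrow> nat \<Rightarrow> real"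
    and Z :: "nat \<Rightarrow> nat \<Rightarrow> real"
begin

abbreviation dims :: "nat \<Rightarrow> cls \<Rightarrow> nat" where
  "dims i \<equiv> cdim n (p i) (q i) (s i)"

abbreviation res :: "nat \<Rightarrow> cls \<Rightarrow> (nat \<Rightarrow> real) \<Rightarrow> (nat \<Rightarrow> real) \<Rightarrow> (nat \<Rightarrow> real) \<Rightarrow> nat \<Rightarrow> real" where
  "res i \<equiv> resid (\<lambda>x j. F i j x) (affmap n (Gm i) (G0 i)) (affmap n (Hm i) (H0 i))"

abbreviation aug_lag :: "nat \<Rightarrow> nat \<Rightarrow> (nat \<Rightarrow> real) \<Rightarrow> (nat \<Rightarrow> real) \<Rightarrow> (cls \<Rightarrow> nat \<Rightarrow> real) \<Rightarrow> real" where
  "aug_lag k i x z y \<equiv> augL n f0 (dims i) (\<lambda>x j. F i j x) (affmap n (Gm i) (G0 i)) (affmap n (Hm i) (H0 i))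
     (rho i) x z y (mu k i)"

abbreviation in_box :: "(nat \<Rightarrow> real) \<Rightarrow> bool" where
  "in_box x \<equiv> inbox n (\<lambda>j. - u j) u x"

abbreviation in_block_box :: "nat \<Rightarrow> (nat \<Rightarrow> real) \<Rightarrow> bool" where
  "in_block_box l x \<equiv> \<forall>j\<in>B l. - u j \<le> x j \<and> x j \<le> u j"

abbreviation in_slack_box :: "nat \<Rightarrow> cls \<Rightarrow> (nat \<Rightarrow> real) \<Rightarrow> bool" where
  "in_slack_box i c y \<equiv> inbox (dims i c) (\<lambda>_. 0) (uY i c) y"

abbreviation x_objective :: "nat \<Rightarrow> nat \<Rightarrow> nat \<Rightarrow> (nat \<Rightarrow> real) \<Rightarrow> real" where
  "x_objective k i l V \<equiv> aug_lag k i (blk_upd B l (gs_prev B l (X (Suc k) i) (X k i)) V) (Z k) (Y k i)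
     + sig1 k i l * norm1_on (B l) (vdiff V (X k i)) + sig2 k i l / 2 * sqn_on (B l) (vdiff V (X k i))"

abbreviation z_objective :: "nat \<Rightarrow> (nat \<Rightarrow> real) \<Rightarrow> real" where
  "z_objective k W \<equiv> \<Sum>i\<in>{1..N}.
       ip n (mu k i PX) (\<lambda>j. X (Suc k) i j - W j + Y k i PX j)
     + ip n (mu k i NX) (\<lambda>j. W j - X (Suc k) i j + Y k i NX j)
     + rho i / 2 * (sqn n (\<lambda>j. X (Suc k) i j - W j + Y k i PX j)
                    + sqn n (\<lambda>j. W j - X (Suc k) i j + Y k i NX j))
     + tau k / 2 * sqn n (vdiff W (Z k))"

abbreviation y_objective :: "nat \<Rightarrow> nat \<Rightarrow> cls \<Rightarrow> (nat \<Rightarrow> real) \<Rightarrow> real" where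
  "y_objective k i c W \<equiv> ip (dims i c) (mu k i c) (res i c (X (Suc k) i) (Z (Suc k)) W)
     + rho i / 2 * sqn (dims i c) (res i c (X (Suc k) i) (Z (Suc k)) W)
     + gam k i c / 2 * sqn (dims i c) (vdiff W (Y k i c))"

end

locale admm_iterates = admm_data +
  assumes F_quad: "i \<in> {1..N} \<Longrightarrow> j < p i \<Longrightarrow> quad_form n (F i j)"
    and B_cover: "(\<Union>l\<in>{1..M}. B l) = {..<n}"
    and B_disj: "disjoint_family_on B {1..M}"
    and X_init: "i \<in> {1..N} \<Longrightarrow> in_box (X 0 i)"
    and Z_init: "in_box (Z 0)"
    and Y_init: "i \<in> {1..N} \<Longrightarrow> in_slack_box i c (Y 0 i c)"
    and X_feasible: "i \<in> {1..N} \<Longrightarrow> l \<in> {1..M} \<Longrightarrow> in_block_box l (X (Suc k) i)"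
    and X_minimal: "i \<in> {1..N} \<Longrightarrow> l \<in> {1..M} \<Longrightarrow> in_block_box l V \<Longrightarrow>
      x_objective k i l (X (Suc k) i) \<le> x_objective k i l V"
    and Z_feasible: "in_box (Z (Suc k))"
    and Z_minimal: "in_box W \<Longrightarrow> z_objective k (Z (Suc k)) \<le> z_objective k W"
    and Y_feasible: "i \<in> {1..N} \<Longrightarrow> in_slack_box i c (Y (Suc k) i c)"
    and Y_minimal: "i \<in> {1..N} \<Longrightarrow> in_slack_box i c W \<Longrightarrow>
      y_objective k i c (Y (Suc k) i c) \<le> y_objective k i c W"
begin

lemma X_in_box:
  assumes "i \<in> {1..N}"
  shows "in_box (X k i)"
proof (cases k)
  case 0
  then show ?thesis using X_init[OF assms] by simp
next
  case (Suc k')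
  have "- u j \<le> X k i j \<and> X k i j \<le> u j" if "j < n" for j
  proof -
    obtain l where "l \<in> {1..M}" "j \<in> B l"
      using B_cover \<open>j < n\<close> by blast
    then show ?thesis
      using X_feasible[OF assms, of l k'] Suc by blast
  qed
  then show ?thesis
    unfolding inbox_def by blast
qed

lemma Z_in_box: "in_box (Z k)"
  using Z_init Z_feasible by (cases k) simp_all

lemma Y_in_box: "i \<in> {1..N} \<Longrightarrow> in_slack_box i c (Y k i c)"
  using Y_init Y_feasible by (cases k) simp_all

lemma B_subset: "l \<in> {1..M} \<Longrightarrow> B l \<subseteq> {..<n}"
  using B_cover by blast

lemma B_disjoint_prev: "l \<in> {1..M} \<Longrightarrow> B l \<inter> (\<Union>l'\<in>{1..<l}. B l') = {}"
  using B_disj unfolding disjoint_family_on_def by fastforce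

abbreviation x_gs_cur :: "nat \<Rightarrow> nat \<Rightarrow> nat \<Rightarrow> nat \<Rightarrow> real" where
  "x_gs_cur k i l \<equiv> gs_cur B l (X (Suc k) i) (X k i)"

abbreviation x_gs_prev :: "nat \<Rightarrow> nat \<Rightarrow> nat \<Rightarrow> nat \<Rightarrow> real" where
  "x_gs_prev k i l \<equiv> gs_prev B l (X (Suc k) i) (X k i)"

abbreviation x_step :: "nat \<Rightarrow> nat \<Rightarrow> nat \<Rightarrow> real" where
  "x_step k i \<equiv> vdiff (X (Suc k) i) (X k i)"

abbreviation F_linearization_gap :: "nat \<Rightarrow> nat \<Rightarrow> nat \<Rightarrow> real" where
  "F_linearization_gap k i l \<equiv> ip (p i)
     (\<lambda>j. mu k i CF j + rho i * (F i j (x_gs_cur k i l) + Y k i CF j))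
     (\<lambda>j. F i j (x_gs_prev k i l) - F i j (x_gs_cur k i l)
          - dirderiv (F i j) (x_gs_cur k i l) (restr (B l) (vdiff (X k i) (X (Suc k) i))))"

abbreviation block_sq_change :: "nat \<Rightarrow> nat \<Rightarrow> nat \<Rightarrow> real" where
  "block_sq_change k i l \<equiv> sqn (p i) (vdiff (\<lambda>j. F i j (x_gs_cur k i l)) (\<lambda>j. F i j (x_gs_prev k i l)))
     + sqn (q i) (blockmap (Gm i) (B l) (x_step k i))
     + 2 * sqn (s i) (blockmap (Hm i) (B l) (x_step k i))"

abbreviation lagrangian :: "nat \<Rightarrow> real" where
  "lagrangian k \<equiv> \<Sum>i\<in>{1..N}. aug_lag k i (X k i) (Z k) (Y k i)"

abbreviation dual_change :: "nat \<Rightarrow> real" where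
  "dual_change k \<equiv> \<Sum>i\<in>{1..N}. \<Sum>c\<in>allC.
     ip (dims i c) (vdiff (mu k i c) (mu (Suc k) i c)) (res i c (X (Suc k) i) (Z (Suc k)) (Y (Suc k) i c))"

abbreviation primal_change :: "nat \<Rightarrow> real" where
  "primal_change k \<equiv> \<Sum>i\<in>{1..N}.
       (\<Sum>l\<in>{1..M}. sig2 k i l * sqn_on (B l) (x_step k i))
     + rho i * sqn n (x_step k i)
     + (tau k + rho i) * sqn n (vdiff (Z (Suc k)) (Z k))
     + (\<Sum>c\<in>allC. (gam k i c + rho i / 2) * sqn (dims i c) (vdiff (Y (Suc k) i c) (Y k i c)))
     + rho i / 2 * (\<Sum>l\<in>{1..M}. block_sq_change k i l)"

lemma x_block_expansion:
  assumes i: "i \<in> {1..N}" and l: "l \<in> {1..M}"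
  obtains A C where
    "\<And>t. aug_lag k i (\<lambda>j. x_gs_cur k i l j + t * restr (B l) (vdiff (X k i) (X (Suc k) i)) j) (Z k) (Y k i)
       = aug_lag k i (x_gs_cur k i l) (Z k) (Y k i) + t * A + t\<^sup>2 * C t"
    and "continuous_on {0..1} C"
    and "C 1 = F_linearization_gap k i l + rho i * sqn_on (B l) (x_step k i) + rho i / 2 * block_sq_change k i l"
proof -
  define d where "d = restr (B l) (vdiff (X k i) (X (Suc k) i))"
  have XP: "(\<lambda>j. x_gs_cur k i l j + d j) = x_gs_prev k i l"
    using gs_cur_add_restr[OF _ B_disjoint_prev[OF l]] l unfolding d_def by simp
  obtain A C where expand: "\<And>t. aug_lag k i (\<lambda>j. x_gs_cur k i l j + t * d j) (Z k) (Y k i)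
       = aug_lag k i (x_gs_cur k i l) (Z k) (Y k i) + t * A + t\<^sup>2 * C t"
    and cont: "continuous_on {0..1} C"
    and C1: "C 1 = ip (p i) (\<lambda>j. mu k i CF j + rho i * (F i j (x_gs_cur k i l) + Y k i CF j))
                   (\<lambda>j. F i j (\<lambda>j. x_gs_cur k i l j + d j) - F i j (x_gs_cur k i l)
                        - dirderiv (F i j) (x_gs_cur k i l) d)
             + rho i / 2 * (2 * sqn n d
                 + sqn (p i) (\<lambda>j. F i j (x_gs_cur k i l) - F i j (\<lambda>j. x_gs_cur k i l j + d j))
                 + sqn (q i) (\<lambda>j. \<Sum>t<n. Gm i j t * d t) + 2 * sqn (s i) (\<lambda>j. \<Sum>t<n. Hm i j t * d t))"
    using augL_along_line[where Fi = "F i" and p = "p i" and cost = f0 and q = "q i" and s = "s i"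
        and Gm = "Gm i" and Gb = "G0 i" and Hm = "Hm i" and Hb = "H0 i" and r = "rho i" and z = "Z k"
        and y = "Y k i" and mu = "mu k i" and x = "x_gs_cur k i l" and d = d, OF F_quad[OF i]]
    by blast
  have "sqn n d = sqn_on (B l) (x_step k i)"
    unfolding d_def sqn_restr[OF B_subset[OF l]] by (rule sqn_on_vdiff_commute)
  moreover have "sqn (q i) (\<lambda>j. \<Sum>t<n. Gm i j t * d t) = sqn (q i) (blockmap (Gm i) (B l) (x_step k i))"
    and "sqn (s i) (\<lambda>j. \<Sum>t<n. Hm i j t * d t) = sqn (s i) (blockmap (Hm i) (B l) (x_step k i))"
    unfolding d_def sum_restr_eq_blockmap[OF B_subset[OF l]]
      blockmap_vdiff_commute[of _ _ "X k i" "X (Suc k) i"] by (rule sqn_uminus)+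
  ultimately have "C 1 = F_linearization_gap k i l
      + rho i / 2 * (2 * sqn_on (B l) (x_step k i) + block_sq_change k i l)"
    unfolding C1 XP by (simp add: d_def vdiff_def)
  also have "\<dots> = F_linearization_gap k i l + rho i * sqn_on (B l) (x_step k i)
      + rho i / 2 * block_sq_change k i l"
    by (simp only: distrib_left)
  finally show ?thesis
    using that expand cont unfolding d_def by blast
qed

lemma x_block_descent:
  assumes i: "i \<in> {1..N}" and l: "l \<in> {1..M}"
  shows "sig1 k i l * norm1_on (B l) (vdiff (X k i) (X (Suc k) i)) + sig2 k i l * sqn_on (B l) (x_step k i)
      + rho i * sqn_on (B l) (x_step k i) + F_linearization_gap k i l + rho i / 2 * block_sq_change k i l
    \<le> aug_lag k i (x_gs_prev k i l) (Z k) (Y k i) - aug_lag k i (x_gs_cur k i l) (Z k) (Y k i)"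
proof -
  define xn where "xn = X (Suc k) i"
  define xo where "xo = X k i"
  define d where "d = restr (B l) (vdiff xo xn)"
  define V where "V t = (\<lambda>j. xn j + t * (xo j - xn j))" for t :: real
  define f where "f t = aug_lag k i (\<lambda>j. x_gs_cur k i l j + t * d j) (Z k) (Y k i)" for t
  define a where "a = sig1 k i l * norm1_on (B l) (vdiff xo xn)"
  define b where "b = sig2 k i l * sqn_on (B l) (vdiff xn xo)"
  obtain A C where expand: "\<And>t. f t = f 0 + t * A + t\<^sup>2 * C t"
    and cont: "continuous_on {0..1} C"
    and C1: "C 1 = F_linearization_gap k i l + rho i * sqn_on (B l) (x_step k i)
                   + rho i / 2 * block_sq_change k i l"
    using x_block_expansion[OF i l] unfolding f_def d_def xn_def xo_def by auto
  have objective: "x_objective k i l (V t) = f t + (1 - t) * a + (1 - t)\<^sup>2 * b / 2" if "t \<le> 1" for t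
  proof -
    have "blk_upd B l (gs_prev B l xn xo) (V t) = (\<lambda>j. x_gs_cur k i l j + t * d j)"
      using blk_upd_gs_prev_segment[OF _ B_disjoint_prev[OF l]] l
      unfolding V_def d_def xn_def xo_def by simp
    moreover have "norm1_on (B l) (vdiff (V t) xo) = (1 - t) * norm1_on (B l) (vdiff xo xn)"
      unfolding V_def using that by (rule norm1_on_segment)
    moreover have "sqn_on (B l) (vdiff (V t) xo) = (1 - t)\<^sup>2 * sqn_on (B l) (vdiff xn xo)"
      unfolding V_def by (rule sqn_on_segment)
    moreover have "L + s1 * ((1 - t) * N1) + s2 / 2 * ((1 - t)\<^sup>2 * S)
        = L + (1 - t) * (s1 * N1) + (1 - t)\<^sup>2 * (s2 * S) / 2" for L s1 s2 N1 S :: real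
      by (simp add: algebra_simps)
    ultimately show ?thesis
      unfolding f_def a_def b_def xn_def xo_def by (simp only:)
  qed
  have objective0: "x_objective k i l (X (Suc k) i) = f 0 + a + b / 2"
    using objective[of 0] unfolding V_def xn_def by simp
  have "f 0 + a + b + C 1 \<le> f 1"
  proof (rule descent_of_segment_minimality[OF expand cont])
    fix t :: real assume t: "0 < t" "t \<le> 1"
    have "in_block_box l (V t)"
    proof
      fix j assume "j \<in> B l"
      then have "j < n"
        using B_subset[OF l] by blast
      then show "- u j \<le> V t j \<and> V t j \<le> u j"
        using X_in_box[OF i, of k] X_in_box[OF i, of "Suc k"] t
        unfolding V_def xn_def xo_def inbox_def by (intro segment_in_interval) auto
    qed
    from X_minimal[where k = k, OF i l this]
    show "f 0 + a + b / 2 \<le> f t + (1 - t) * a + (1 - t)\<^sup>2 * b / 2"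
      unfolding objective0 objective[OF t(2)] .
  qed
  moreover have "f 0 = aug_lag k i (x_gs_cur k i l) (Z k) (Y k i)"
    and "f 1 = aug_lag k i (x_gs_prev k i l) (Z k) (Y k i)"
    using gs_cur_add_restr[OF _ B_disjoint_prev[OF l]] l unfolding f_def d_def xn_def xo_def by simp_all
  ultimately show ?thesis
    unfolding C1 a_def b_def xn_def xo_def by simp
qed

lemma x_descent:
  assumes i: "i \<in> {1..N}"
  shows "(\<Sum>l\<in>{1..M}. sig2 k i l * sqn_on (B l) (x_step k i)) + rho i * sqn n (x_step k i)
      + rho i / 2 * (\<Sum>l\<in>{1..M}. block_sq_change k i l)
      + (\<Sum>l\<in>{1..M}. sig1 k i l * norm1_on (B l) (vdiff (X k i) (X (Suc k) i)) + F_linearization_gap k i l)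
    \<le> aug_lag k i (X k i) (Z k) (Y k i) - aug_lag k i (X (Suc k) i) (Z k) (Y k i)"
proof -
  define \<phi> where "\<phi> x = aug_lag k i x (Z k) (Y k i)" for x
  have rearrange: "(\<Sum>l\<in>I. a l + b l + r * c l + e l + r / 2 * g l)
      = (\<Sum>l\<in>I. b l) + r * (\<Sum>l\<in>I. c l) + r / 2 * (\<Sum>l\<in>I. g l) + (\<Sum>l\<in>I. a l + e l)"
    for I :: "nat set" and a b c e g :: "nat \<Rightarrow> real" and r :: real
    by (simp add: sum.distrib sum_distrib_left algebra_simps)
  have "(\<Sum>l\<in>{1..M}. sig2 k i l * sqn_on (B l) (x_step k i)) + rho i * sqn n (x_step k i)
      + rho i / 2 * (\<Sum>l\<in>{1..M}. block_sq_change k i l)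
      + (\<Sum>l\<in>{1..M}. sig1 k i l * norm1_on (B l) (vdiff (X k i) (X (Suc k) i)) + F_linearization_gap k i l)
    = (\<Sum>l\<in>{1..M}. sig1 k i l * norm1_on (B l) (vdiff (X k i) (X (Suc k) i))
        + sig2 k i l * sqn_on (B l) (x_step k i) + rho i * sqn_on (B l) (x_step k i)
        + F_linearization_gap k i l + rho i / 2 * block_sq_change k i l)"
    unfolding rearrange sqn_on_blocks[OF B_cover B_disj, of "x_step k i"] ..
  also have "\<dots> \<le> (\<Sum>l\<in>{1..M}. \<phi> (x_gs_prev k i l) - \<phi> (x_gs_prev k i (Suc l)))"
    unfolding \<phi>_def gs_cur_eq_gs_prev_Suc[symmetric] by (intro sum_mono x_block_descent[OF i])
  also have "\<dots> = \<phi> (x_gs_prev k i 1) - \<phi> (x_gs_prev k i (Suc M))"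
    using sum_Suc_diff[of 1 M "\<lambda>l. \<phi> (x_gs_prev k i l)"] by (simp add: sum_subtractf)
  also have "\<phi> (x_gs_prev k i 1) = \<phi> (X k i)"
    unfolding gs_prev_first ..
  also have "\<phi> (x_gs_prev k i (Suc M)) = \<phi> (X (Suc k) i)"
    unfolding \<phi>_def using F_quad[OF i] gs_prev_last[OF B_cover] by (intro augL_cong)
  finally show ?thesis
    unfolding \<phi>_def .
qed

lemma z_descent:
  "(\<Sum>i\<in>{1..N}. (tau k + rho i) * sqn n (vdiff (Z (Suc k)) (Z k)))
   \<le> (\<Sum>i\<in>{1..N}. aug_lag k i (X (Suc k) i) (Z k) (Y k i) - aug_lag k i (X (Suc k) i) (Z (Suc k)) (Y k i))"
proof -
  define zn where "zn = Z (Suc k)"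
  define zo where "zo = Z k"
  define e where "e = vdiff zo zn"
  define pen where "pen i z = penalty n (mu k i PX) (rho i) (\<lambda>j. X (Suc k) i j - z j + Y k i PX j)
      + penalty n (mu k i NX) (rho i) (\<lambda>j. z j - X (Suc k) i j + Y k i NX j)" for i z
  define A where "A i = ip n (\<lambda>j. mu k i PX j + rho i * (X (Suc k) i j - zn j + Y k i PX j)) (\<lambda>j. - e j)
      + ip n (\<lambda>j. mu k i NX j + rho i * (zn j - X (Suc k) i j + Y k i NX j)) e" for i
  have pen_line: "pen i (\<lambda>j. zn j + t * (zo j - zn j)) = pen i zn + t * A i + t\<^sup>2 * (rho i * sqn n e)"
    for i t
  proof -
    have "penalty n (mu k i PX) (rho i) (\<lambda>j. X (Suc k) i j - (zn j + t * (zo j - zn j)) + Y k i PX j)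
        = penalty n (mu k i PX) (rho i) (\<lambda>j. X (Suc k) i j - zn j + Y k i PX j)
          + t * ip n (\<lambda>j. mu k i PX j + rho i * (X (Suc k) i j - zn j + Y k i PX j)) (\<lambda>j. - e j)
          + t\<^sup>2 * (rho i / 2 * sqn n e)"
      by (subst sqn_uminus[symmetric], rule penalty_along_line) (simp add: e_def vdiff_def algebra_simps)
    moreover have "penalty n (mu k i NX) (rho i) (\<lambda>j. zn j + t * (zo j - zn j) - X (Suc k) i j + Y k i NX j)
        = penalty n (mu k i NX) (rho i) (\<lambda>j. zn j - X (Suc k) i j + Y k i NX j)
          + t * ip n (\<lambda>j. mu k i NX j + rho i * (zn j - X (Suc k) i j + Y k i NX j)) e
          + t\<^sup>2 * (rho i / 2 * sqn n e)"
      by (rule penalty_along_line) (simp add: e_def vdiff_def)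
    ultimately show ?thesis
      unfolding pen_def A_def by (simp add: algebra_simps)
  qed
  have objective: "z_objective k W = (\<Sum>i\<in>{1..N}. pen i W) + (\<Sum>i\<in>{1..N}. tau k) / 2 * sqn n (vdiff W zo)"
    for W
    unfolding pen_def penalty_def zo_def
    by (simp add: sum.distrib sum_distrib_right sum_divide_distrib algebra_simps)
  have "(\<Sum>i\<in>{1..N}. pen i zn) + (\<Sum>i\<in>{1..N}. tau k) * sqn n (vdiff zn zo) + (\<Sum>i\<in>{1..N}. rho i * sqn n e)
      \<le> (\<Sum>i\<in>{1..N}. pen i zo)"
  proof (rule descent_of_prox_step)
    show "(\<Sum>i\<in>{1..N}. pen i (\<lambda>j. zn j + t * (zo j - zn j)))
        = (\<Sum>i\<in>{1..N}. pen i zn) + t * (\<Sum>i\<in>{1..N}. A i) + t\<^sup>2 * (\<Sum>i\<in>{1..N}. rho i * sqn n e)" for t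
      unfolding pen_line by (simp add: sum.distrib sum_distrib_left)
    fix t :: real assume "0 < t" "t \<le> 1"
    then have "in_box (\<lambda>j. zn j + t * (zo j - zn j))"
      unfolding zn_def zo_def by (intro inbox_segment Z_in_box) simp_all
    from Z_minimal[where k = k, OF this]
    show "(\<Sum>i\<in>{1..N}. pen i zn) + (\<Sum>i\<in>{1..N}. tau k) / 2 * sqn n (vdiff zn zo)
        \<le> (\<Sum>i\<in>{1..N}. pen i (\<lambda>j. zn j + t * (zo j - zn j)))
          + (\<Sum>i\<in>{1..N}. tau k) / 2 * sqn n (vdiff (\<lambda>j. zn j + t * (zo j - zn j)) zo)"
      unfolding objective zn_def .
  qed
  moreover have "(\<Sum>i\<in>{1..N}. pen i zo) - (\<Sum>i\<in>{1..N}. pen i zn)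
      = (\<Sum>i\<in>{1..N}. aug_lag k i (X (Suc k) i) (Z k) (Y k i) - aug_lag k i (X (Suc k) i) (Z (Suc k)) (Y k i))"
    unfolding pen_def augL_diff_z zn_def zo_def by (simp add: sum_subtractf)
  moreover have "(\<Sum>i\<in>{1..N}. (tau k + rho i) * sqn n (vdiff (Z (Suc k)) (Z k)))
      = (\<Sum>i\<in>{1..N}. tau k) * sqn n (vdiff zn zo) + (\<Sum>i\<in>{1..N}. rho i * sqn n e)"
    unfolding e_def zn_def zo_def sqn_vdiff_commute[of n "Z k" "Z (Suc k)"]
    by (simp add: sum.distrib sum_distrib_right algebra_simps)
  ultimately show ?thesis
    by linarith
qed

lemma y_class_descent:
  assumes i: "i \<in> {1..N}"
  shows "(gam k i c + rho i / 2) * sqn (dims i c) (vdiff (Y (Suc k) i c) (Y k i c))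
    \<le> penalty (dims i c) (mu k i c) (rho i) (res i c (X (Suc k) i) (Z (Suc k)) (Y k i c))
      - penalty (dims i c) (mu k i c) (rho i) (res i c (X (Suc k) i) (Z (Suc k)) (Y (Suc k) i c))"
proof -
  define yn where "yn = Y (Suc k) i c"
  define yo where "yo = Y k i c"
  define d where "d = dims i c"
  define r where "r = res i c (X (Suc k) i) (Z (Suc k))"
  define \<phi> where "\<phi> y = penalty d (mu k i c) (rho i) (r y)" for y
  have "penalty d (mu k i c) (rho i) (r yn) + gam k i c * sqn d (vdiff yn yo)
      + rho i / 2 * sqn d (vdiff yn yo) \<le> penalty d (mu k i c) (rho i) (r yo)"
  proof (rule descent_of_prox_step[where \<phi> = \<phi>, unfolded \<phi>_def])
    have "r (\<lambda>j. yn j + t * (yo j - yn j)) j = r yn j + t * vdiff yo yn j" for t j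
      using resid_slack[of _ _ _ c _ _ "\<lambda>j. yn j + t * (yo j - yn j)" j] resid_slack[of _ _ _ c _ _ yn j]
      unfolding r_def vdiff_def by simp
    then show "penalty d (mu k i c) (rho i) (r (\<lambda>j. yn j + t * (yo j - yn j)))
        = penalty d (mu k i c) (rho i) (r yn) + t * ip d (\<lambda>j. mu k i c j + rho i * r yn j) (vdiff yo yn)
          + t\<^sup>2 * (rho i / 2 * sqn d (vdiff yn yo))" for t
      unfolding sqn_vdiff_commute[of d yn] by (rule penalty_along_line)
    fix t :: real assume "0 < t" "t \<le> 1"
    then have "in_slack_box i c (\<lambda>j. yn j + t * (yo j - yn j))"
      unfolding yn_def yo_def by (intro inbox_segment Y_in_box[OF i]) simp_all
    from Y_minimal[where k = k, OF i this]
    show "penalty d (mu k i c) (rho i) (r yn) + gam k i c / 2 * sqn d (vdiff yn yo)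
        \<le> penalty d (mu k i c) (rho i) (r (\<lambda>j. yn j + t * (yo j - yn j)))
          + gam k i c / 2 * sqn d (vdiff (\<lambda>j. yn j + t * (yo j - yn j)) yo)"
      unfolding penalty_def r_def d_def yn_def yo_def by (simp add: algebra_simps)
  qed
  then show ?thesis
    unfolding yn_def yo_def d_def r_def by (simp add: algebra_simps)
qed

lemma y_descent:
  assumes i: "i \<in> {1..N}"
  shows "(\<Sum>c\<in>allC. (gam k i c + rho i / 2) * sqn (dims i c) (vdiff (Y (Suc k) i c) (Y k i c)))
    \<le> aug_lag k i (X (Suc k) i) (Z (Suc k)) (Y k i) - aug_lag k i (X (Suc k) i) (Z (Suc k)) (Y (Suc k) i)"
  unfolding augL_diff_y by (intro sum_mono y_class_descent[OF i])

lemma lagrangian_descent: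
  "lagrangian k \<ge> lagrangian (Suc k) + dual_change k + primal_change k
     + (\<Sum>i\<in>{1..N}. \<Sum>l\<in>{1..M}.
          sig1 k i l * norm1_on (B l) (vdiff (X k i) (X (Suc k) i)) + F_linearization_gap k i l)"
proof -
  have rearrange: "(\<Sum>i\<in>I. a i + b i + c i + d i + e i) + (\<Sum>i\<in>I. g i)
      = (\<Sum>i\<in>I. a i + b i + e i + g i) + (\<Sum>i\<in>I. c i) + (\<Sum>i\<in>I. d i)"
    for I :: "nat set" and a b c d e g :: "nat \<Rightarrow> real"
    by (simp add: sum.distrib algebra_simps)
  have "lagrangian (Suc k) + dual_change k = (\<Sum>i\<in>{1..N}. aug_lag k i (X (Suc k) i) (Z (Suc k)) (Y (Suc k) i))"
    by (simp add: sum.distrib[symmetric] augL_dual_update)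
  moreover have "lagrangian k - (\<Sum>i\<in>{1..N}. aug_lag k i (X (Suc k) i) (Z (Suc k)) (Y (Suc k) i))
    = (\<Sum>i\<in>{1..N}. aug_lag k i (X k i) (Z k) (Y k i) - aug_lag k i (X (Suc k) i) (Z k) (Y k i))
    + (\<Sum>i\<in>{1..N}. aug_lag k i (X (Suc k) i) (Z k) (Y k i) - aug_lag k i (X (Suc k) i) (Z (Suc k)) (Y k i))
    + (\<Sum>i\<in>{1..N}. aug_lag k i (X (Suc k) i) (Z (Suc k)) (Y k i) - aug_lag k i (X (Suc k) i) (Z (Suc k)) (Y (Suc k) i))"
    (is "_ = ?dX + ?dZ + ?dY")
    unfolding sum_subtractf by simp
  moreover have "primal_change k + (\<Sum>i\<in>{1..N}. \<Sum>l\<in>{1..M}.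
          sig1 k i l * norm1_on (B l) (vdiff (X k i) (X (Suc k) i)) + F_linearization_gap k i l)
    = (\<Sum>i\<in>{1..N}. (\<Sum>l\<in>{1..M}. sig2 k i l * sqn_on (B l) (x_step k i)) + rho i * sqn n (x_step k i)
         + rho i / 2 * (\<Sum>l\<in>{1..M}. block_sq_change k i l)
         + (\<Sum>l\<in>{1..M}. sig1 k i l * norm1_on (B l) (vdiff (X k i) (X (Suc k) i)) + F_linearization_gap k i l))
      + (\<Sum>i\<in>{1..N}. (tau k + rho i) * sqn n (vdiff (Z (Suc k)) (Z k)))
      + (\<Sum>i\<in>{1..N}. \<Sum>c\<in>allC. (gam k i c + rho i / 2) * sqn (dims i c) (vdiff (Y (Suc k) i c) (Y k i c)))"
    (is "_ = ?X + ?Z + ?Y")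
    by (rule rearrange)
  moreover have "?X \<le> ?dX"
    by (intro sum_mono x_descent)
  moreover have "?Z \<le> ?dZ"
    by (rule z_descent)
  moreover have "?Y \<le> ?dY"
    by (intro sum_mono y_descent)
  ultimately show ?thesis
    by linarith
qed

end

theorem lemma1:
  fixes n N M :: nat
    and u f0 :: "nat \<Rightarrow> real"
    and p q s :: "nat \<Rightarrow> nat"
    and F :: "nat \<Rightarrow> nat \<Rightarrow> (nat \<Rightarrow> real) \<Rightarrow> real"
    and Gm Hm :: "nat \<Rightarrow> nat \<Rightarrow> nat \<Rightarrow> real"
    and G0 H0 :: "nat \<Rightarrow> nat \<Rightarrow> real"
    and B :: "nat \<Rightarrow> nat set"
    and uY :: "nat \<Rightarrow> cls \<Rightarrow> nat \<Rightarrow> real"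
    and rho :: "nat \<Rightarrow> real"
    and sig1 sig2 :: "nat \<Rightarrow> nat \<Rightarrow> nat \<Rightarrow> real"
    and tau :: "nat \<Rightarrow> real"
    and gam :: "nat \<Rightarrow> nat \<Rightarrow> cls \<Rightarrow> real"
    and mu Y :: "nat \<Rightarrow> nat \<Rightarrow> cls \<Rightarrow> nat \<Rightarrow> real"
    and X :: "nat \<Rightarrow> nat \<Rightarrow> nat \<Rightarrow> real"
    and Z :: "nat \<Rightarrow> nat \<Rightarrow> real"
    and k :: nat
  assumes u_pos: "\<forall>j<n. 0 < u j"
    and F_quad: "\<forall>i\<in>{1..N}. \<forall>j<p i. quad_form n (F i j) \<and> convex_on_box n u (F i j)"
    and B_sub: "\<forall>l\<in>{1..M}. B l \<subseteq> {..<n}"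
    and B_cover: "(\<Union>l\<in>{1..M}. B l) = {..<n}"
    and B_disj: "\<forall>l\<in>{1..M}. \<forall>l'\<in>{1..M}. l \<noteq> l' \<longrightarrow> B l \<inter> B l' = {}"
    and uY_pos: "\<forall>i\<in>{1..N}. \<forall>c\<in>allC. \<forall>j<cdim n (p i) (q i) (s i) c. 0 < uY i c j"
    and rho_pos: "\<forall>i\<in>{1..N}. 0 < rho i"
    and sig1_nn: "\<forall>k'. \<forall>i\<in>{1..N}. \<forall>l\<in>{1..M}. 0 \<le> sig1 k' i l"
    and sig2_pos: "\<forall>k'. \<forall>i\<in>{1..N}. \<forall>l\<in>{1..M}. 0 < sig2 k' i l"
    and tau_pos: "\<forall>k'. 0 < tau k'"
    and gam_pos: "\<forall>k'. \<forall>i\<in>{1..N}. \<forall>c\<in>allC. 0 < gam k' i c"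
    and muF_nn: "\<forall>k'. \<forall>i\<in>{1..N}. \<forall>j<p i. 0 \<le> mu k' i CF j"
    and X0: "\<forall>i\<in>{1..N}. inbox n (\<lambda>j. - u j) u (X 0 i)"
    and Z0: "inbox n (\<lambda>j. - u j) u (Z 0)"
    and Y0: "\<forall>i\<in>{1..N}. \<forall>c\<in>allC. inbox (cdim n (p i) (q i) (s i) c) (\<lambda>_. 0) (uY i c) (Y 0 i c)"
    and U1: "\<forall>k'. \<forall>i\<in>{1..N}. \<forall>l\<in>{1..M}.
      (let Li = (\<lambda>x. augL n f0 (cdim n (p i) (q i) (s i)) (\<lambda>x' j. F i j x')
                   (affmap n (Gm i) (G0 i)) (affmap n (Hm i) (H0 i)) (rho i)
                   x (Z k') (Y k' i) (mu k' i));
           obj = (\<lambda>V. Li (blk_upd B l (gs_prev B l (X (Suc k') i) (X k' i)) V)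
                   + sig1 k' i l * norm1_on (B l) (vdiff V (X k' i))
                   + sig2 k' i l / 2 * sqn_on (B l) (vdiff V (X k' i)))
       in (\<forall>j\<in>B l. - u j \<le> X (Suc k') i j \<and> X (Suc k') i j \<le> u j) \<and>
          (\<forall>V. (\<forall>j\<in>B l. - u j \<le> V j \<and> V j \<le> u j) \<longrightarrow> obj (X (Suc k') i) \<le> obj V))"
    and U2: "\<forall>k'.
      (let obj = (\<lambda>W. \<Sum>i\<in>{1..N}.
              ip n (mu k' i PX) (\<lambda>j. X (Suc k') i j - W j + Y k' i PX j)
            + ip n (mu k' i NX) (\<lambda>j. W j - X (Suc k') i j + Y k' i NX j)
            + rho i / 2 * (sqn n (\<lambda>j. X (Suc k') i j - W j + Y k' i PX j)
                           + sqn n (\<lambda>j. W j - X (Suc k') i j + Y k' i NX j))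
            + tau k' / 2 * sqn n (vdiff W (Z k')))
       in inbox n (\<lambda>j. - u j) u (Z (Suc k')) \<and>
          (\<forall>W. inbox n (\<lambda>j. - u j) u W \<longrightarrow> obj (Z (Suc k')) \<le> obj W))"
    and U3: "\<forall>k'. \<forall>i\<in>{1..N}. \<forall>c\<in>allC.
      (let d = cdim n (p i) (q i) (s i) c;
           r = (\<lambda>W. resid (\<lambda>x' j. F i j x') (affmap n (Gm i) (G0 i)) (affmap n (Hm i) (H0 i))
                      c (X (Suc k') i) (Z (Suc k')) W);
           obj = (\<lambda>W. ip d (mu k' i c) (r W) + rho i / 2 * sqn d (r W)
                      + gam k' i c / 2 * sqn d (vdiff W (Y k' i c)))
       in inbox d (\<lambda>_. 0) (uY i c) (Y (Suc k') i c) \<and>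
          (\<forall>W. inbox d (\<lambda>_. 0) (uY i c) W \<longrightarrow> obj (Y (Suc k') i c) \<le> obj W))"
  shows
    "(let Fv = (\<lambda>i x' j. F i j x');
          Gv = (\<lambda>i. affmap n (Gm i) (G0 i));
          Hv = (\<lambda>i. affmap n (Hm i) (H0 i));
          dims = (\<lambda>i. cdim n (p i) (q i) (s i));
          L = (\<lambda>k'. \<Sum>i\<in>{1..N}. augL n f0 (dims i) (Fv i) (Gv i) (Hv i) (rho i)
                                  (X k' i) (Z k') (Y k' i) (mu k' i));
          rnew = (\<lambda>i c. resid (Fv i) (Gv i) (Hv i) c (X (Suc k) i) (Z (Suc k)) (Y (Suc k) i c));
          D = (\<Sum>i\<in>{1..N}. \<Sum>c\<in>allC.
                 ip (dims i c) (vdiff (mu k i c) (mu (Suc k) i c)) (rnew i c));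
          XS = (\<lambda>i l. gs_cur B l (X (Suc k) i) (X k i));
          XP = (\<lambda>i l. gs_prev B l (X (Suc k) i) (X k i));
          dX = (\<lambda>i. vdiff (X (Suc k) i) (X k i));
          P = (\<Sum>i\<in>{1..N}.
                 (\<Sum>l\<in>{1..M}. sig2 k i l * sqn_on (B l) (dX i))
               + rho i * sqn n (dX i)
               + (tau k + rho i) * sqn n (vdiff (Z (Suc k)) (Z k))
               + (\<Sum>c\<in>allC. (gam k i c + rho i / 2) * sqn (dims i c) (vdiff (Y (Suc k) i c) (Y k i c)))
               + rho i / 2 * (\<Sum>l\<in>{1..M}.
                    sqn (p i) (vdiff (Fv i (XS i l)) (Fv i (XP i l)))
                  + sqn (q i) (blockmap (Gm i) (B l) (dX i))
                  + 2 * sqn (s i) (blockmap (Hm i) (B l) (dX i))));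
          U = (\<lambda>i l. ip (p i)
                 (\<lambda>j. mu k i CF j + rho i * (F i j (XS i l) + Y k i CF j))
                 (\<lambda>j. F i j (XP i l) - F i j (XS i l)
                      - dirderiv (F i j) (XS i l) (restr (B l) (vdiff (X k i) (X (Suc k) i)))))
      in L k \<ge> L (Suc k) + D + P
               + (\<Sum>i\<in>{1..N}. \<Sum>l\<in>{1..M}.
                    sig1 k i l * norm1_on (B l) (vdiff (X k i) (X (Suc k) i)) + U i l))"
proof -
  interpret admm_iterates n N M u f0 p q s F Gm Hm G0 H0 B uY rho sig1 sig2 tau gam mu Y X Z
  proof
    show "quad_form n (F i j)" if "i \<in> {1..N}" "j < p i" for i j
      using F_quad that by blast
  qed (use B_cover B_disj X0 Z0 Y0 U1 U2 U3 in \<open>simp_all add: Let_def disjoint_family_on_def\<close>)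
  show ?thesis
    using lagrangian_descent[of k] unfolding Let_def .
qed

end
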